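(* Let $q\ge 2$, $n\ge 1$ and $h\in F(n,q)$. Then $\kappa^{\min}(h)\le \mathrm{pw}(\mathrm{IG}^*(h))$.
   Context: Let $q\ge 2$, $A=\{0,1,\dots,q-1\}$, $[n]=\{1,\dots,n\}$, and let $F(n,q)$ be the set of all maps $A^n\to A^n$. For $f\in F(m,q)$ and $i\in[m]$, $f_i$ is the $i$-th coordinate function and $f^i(x)=(x_1,\dots,x_{i-1},f_i(x),x_{i+1},\dots,x_m)$; for a word $w=(w_1,\dots,w_t)$ over $[m]$, $f^w=f^{w_t}\circ\cdots\circ f^{w_1}$. $\Pi([m])$ is the set of permutations of $[m]$ written as words $(w_1,\dots,w_m)$. $\mathrm{pr}_{[n]}:A^m\to A^n$ is the projection onto the first $n$ coordinates. For $m\ge n$, $(f,w)$ with $f\in F(m,q)$, $w\in\Pi([m])$ sequentializes $h\in F(n,q)$ if $\mathrm{pr}_{[n]}\circ f^w=h\circ\mathrm{pr}_{[n]}$. $\kappa^{\min}(h)$ is the smallest $k\ge 0$ such that there exist $f\in F(n+k,q)$ and $w\in\Pi([n+k])$ with $(f,w)$ sequentializing $h$. The interaction graph $\mathrm{IG}(h)$ is the directed graph on $[n]$ with an arc $(i,j)$ iff there exist $x,y\in A^n$ with $x_\ell=y_\ell$ for all $\ell\ne i$ and $h_j(x)\ne h_j(y)$; $\mathrm{IG}^*(h)$ is its undirected version ($\{i,j\}$ is an edge, possibly a loop, iff $(i,j)$ or $(j,i)$ is an arc). A path decomposition of an undirected graph $G=(V,E)$ is a sequence $X_1,\dots,X_p$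 of subsets of $V$ such that every vertex lies in some $X_a$, every edge has both endpoints in some common $X_a$, and if $v\in X_a\cap X_b$ with $a<b$ then $v\in X_c$ for all $c\in[a,b]$. Its size is $\max_a|X_a|-1$, and the pathwidth $\mathrm{pw}(G)$ is the minimum size of a path decomposition of $G$. *)

theory Defs
  imports "HOL-Library.FuncSet"
begin

text \<open>Configurations in A^n, A = {0..q-1}, coordinates indexed by [n] = {1..n},
  represented extensionally (undefined outside [n]).\<close>
definition states :: "nat \<Rightarrow> nat \<Rightarrow> (nat \<Rightarrow> nat) set" where
  "states q n = PiE {1..n} (\<lambda>_. {..<q})"

text \<open>F(n,q): maps A^n \<rightarrow> A^n (only their values on A^n matter).\<close>
definition Fmaps :: "nat \<Rightarrow> nat \<Rightarrow> ((nat \<Rightarrow> nat) \<Rightarrow> (nat \<Rightarrow> nat)) set" where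
  "Fmaps q n = {h. \<forall>x\<in>states q n. h x \<in> states q n}"

definition upd :: "((nat \<Rightarrow> nat) \<Rightarrow> (nat \<Rightarrow> nat)) \<Rightarrow> nat \<Rightarrow> (nat \<Rightarrow> nat) \<Rightarrow> (nat \<Rightarrow> nat)" where
  "upd f i x = x(i := f x i)"

text \<open>f^w = f^{w_t} o ... o f^{w_1} (w_1 applied first).\<close>
definition seq_apply :: "((nat \<Rightarrow> nat) \<Rightarrow> (nat \<Rightarrow> nat)) \<Rightarrow> nat list \<Rightarrow> (nat \<Rightarrow> nat) \<Rightarrow> (nat \<Rightarrow> nat)" where
  "seq_apply f w = fold (\<lambda>i. upd f i) w"

definition pr :: "nat \<Rightarrow> (nat \<Rightarrow> nat) \<Rightarrow> (nat \<Rightarrow> nat)" where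
  "pr n x = restrict x {1..n}"

definition perm_word :: "nat \<Rightarrow> nat list \<Rightarrow> bool" where
  "perm_word m w \<longleftrightarrow> distinct w \<and> set w = {1..m}"

definition sequentializes ::
  "nat \<Rightarrow> nat \<Rightarrow> nat \<Rightarrow> ((nat \<Rightarrow> nat) \<Rightarrow> (nat \<Rightarrow> nat)) \<Rightarrow> nat list
     \<Rightarrow> ((nat \<Rightarrow> nat) \<Rightarrow> (nat \<Rightarrow> nat)) \<Rightarrow> bool" where
  "sequentializes q n m f w h \<longleftrightarrow>
     n \<le> m \<and> f \<in> Fmaps q m \<and> perm_word m w \<and>
     (\<forall>x\<in>states q m. pr n (seq_apply f w x) = h (pr n x))"

definition kappa_min :: "nat \<Rightarrow> nat \<Rightarrow> ((nat \<Rightarrow> nat) \<Rightarrow> (nat \<Rightarrow> nat)) \<Rightarrow> nat" where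
  "kappa_min q n h = (LEAST k. \<exists>f w. sequentializes q n (n + k) f w h)"

definition IG_arc :: "nat \<Rightarrow> nat \<Rightarrow> ((nat \<Rightarrow> nat) \<Rightarrow> (nat \<Rightarrow> nat)) \<Rightarrow> nat \<Rightarrow> nat \<Rightarrow> bool" where
  "IG_arc q n h i j \<longleftrightarrow> i \<in> {1..n} \<and> j \<in> {1..n} \<and>
     (\<exists>x\<in>states q n. \<exists>y\<in>states q n. (\<forall>l\<in>{1..n}. l \<noteq> i \<longrightarrow> x l = y l) \<and> h x j \<noteq> h y j)"

text \<open>Edges of IG*(h) as sets {i,j} (a loop is the singleton {i}); vertex set is [n].\<close>
definition IG_star_edges :: "nat \<Rightarrow> nat \<Rightarrow> ((nat \<Rightarrow> nat) \<Rightarrow> (nat \<Rightarrow> nat)) \<Rightarrow> nat set set" where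
  "IG_star_edges q n h = {{i, j} | i j. IG_arc q n h i j \<or> IG_arc q n h j i}"

definition path_decomp :: "'a set \<Rightarrow> 'a set set \<Rightarrow> 'a set list \<Rightarrow> bool" where
  "path_decomp V E Xs \<longleftrightarrow>
     (\<forall>X\<in>set Xs. X \<subseteq> V) \<and>
     (\<forall>v\<in>V. \<exists>X\<in>set Xs. v \<in> X) \<and>
     (\<forall>e\<in>E. \<exists>X\<in>set Xs. e \<subseteq> X) \<and>
     (\<forall>a b c v. a \<le> c \<and> c \<le> b \<and> b < length Xs \<and> v \<in> Xs ! a \<and> v \<in> Xs ! b \<longrightarrow> v \<in> Xs ! c)"

definition pathwidth :: "'a set \<Rightarrow> 'a set set \<Rightarrow> nat" where
  "pathwidth V E = (LEAST k. \<exists>Xs. path_decomp V E Xs \<and> (\<forall>X\<in>set Xs. card X \<le> k + 1))"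

end

theory Submission
  imports Defs
begin

text \<open>Take a path decomposition of \<open>IG*(h)\<close> of width \<open>p\<close> and update the vertices in the order
  of the last bag containing them. A vertex that reads an input which has already been overwritten
  cannot be computed from the current state. For every vertex \<open>z\<close>, the vertices not before \<open>z\<close>
  that have an in-neighbour before \<open>z\<close> lie, together with such a neighbour, in a single bag, so
  there are at most \<open>p\<close> of them. Consequently the vertices reading overwritten inputs can be
  greedily coloured with \<open>p\<close> colours so that one auxiliary coordinate per colour, written before
  all vertices, stores enough to recover the new values of its colour class.\<close>

lemma greedy_colouring:
  fixes S :: "'a set" and r :: "'a \<Rightarrow> nat" and conflict :: "'a \<Rightarrow> 'a \<Rightarrow> bool"
  assumes "finite S"
    and conflict_later: "\<And>v u. conflict v u \<Longrightarrow> r v < r u"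
    and few_conflicts: "\<And>v. v \<in> S \<Longrightarrow> card {u\<in>S. conflict v u} < k"
  shows "\<exists>col. \<forall>v\<in>S. col v \<in> {1..k} \<and> (\<forall>u\<in>S. conflict v u \<longrightarrow> col v \<noteq> col u)"
  using assms(1) few_conflicts
proof (induction S rule: finite_ranking_induct[where f = "\<lambda>x. - int (r x)"])
  \<comment> \<open>The vertex of least rank is coloured last: all its conflicts are already coloured,
    and nothing conflicts with it.\<close>
  case empty
  then show ?case by simp
next
  case (insert x S)
  have "card {u\<in>S. conflict v u} \<le> card {u\<in>insert x S. conflict v u}" for v
    by (rule card_mono) (use insert.hyps(1) in auto)
  then have "card {u\<in>S. conflict v u} < k" if "v \<in> S" for v
    using insert.prems[of v] that by (meson insertI2 le_less_trans)
  then obtain col where col: "\<forall>v\<in>S. col v \<in> {1..k} \<and> (\<forall>u\<in>S. conflict v u \<longrightarrow> col v \<noteq> col u)"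
    using insert.IH by blast
  have "card (col ` {u\<in>S. conflict x u}) \<le> card {u\<in>S. conflict x u}"
    by (rule card_image_le) (use insert.hyps(1) in simp)
  also have "\<dots> \<le> card {u\<in>insert x S. conflict x u}"
    by (rule card_mono) (use insert.hyps(1) in auto)
  also have "\<dots> < card {1..k}" using insert.prems[of x] by simp
  finally have "\<not> {1..k} \<subseteq> col ` {u\<in>S. conflict x u}"
    using card_mono[of "col ` {u\<in>S. conflict x u}" "{1..k}"] insert.hyps(1) by auto
  then obtain c where c: "c \<in> {1..k}" "c \<notin> col ` {u\<in>S. conflict x u}" by blast
  have x_first: "\<not> conflict v x" if "v \<in> S" for v
    using insert.hyps(2)[OF that] conflict_later[of v x] by force
  have "\<not> conflict x x" using conflict_later by blast
  then show ?case
    using col c x_first by (intro exI[of _ "col(x := c)"]) auto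
qed

lemma fun_upd_in_states:
  assumes "x \<in> states q n" "i \<in> {1..n}" "v < q"
  shows "x(i := v) \<in> states q n"
  using assms unfolding states_def by (auto simp: PiE_iff extensional_def)

lemma pr_in_states:
  assumes "y \<in> states q m" "n \<le> m"
  shows "pr n y \<in> states q n"
  using assms unfolding states_def pr_def by (auto simp: PiE_iff)

lemma IG_arc_vertices: "IG_arc q n h i j \<Longrightarrow> i \<in> {1..n} \<and> j \<in> {1..n}"
  unfolding IG_arc_def by blast

lemma IG_arc_locality:
  assumes x: "x \<in> states q n" and y: "y \<in> states q n" and u: "u \<in> {1..n}"
    and agree: "\<forall>i\<in>{1..n}. IG_arc q n h i u \<longrightarrow> x i = y i"
  shows "h x u = h y u"
  using x agree
proof (induction "card {i\<in>{1..n}. x i \<noteq> y i}" arbitrary: x rule: less_induct)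
  case less
  show ?case
  proof (cases "\<exists>i\<in>{1..n}. x i \<noteq> y i")
    case False
    with less.prems(1) y have "x = y"
      unfolding states_def by (auto simp: PiE_iff extensional_def fun_eq_iff)
    then show ?thesis by simp
  next
    case True
    then obtain i where i: "i \<in> {1..n}" "x i \<noteq> y i" by auto
    define x' where "x' = x(i := y i)"
    have x': "x' \<in> states q n"
      unfolding x'_def using y i(1) by (intro fun_upd_in_states[OF less.prems(1) i(1)])
        (auto simp: states_def PiE_iff)
    have "\<not> IG_arc q n h i u" using less.prems(2) i by blast
    moreover have "\<forall>l\<in>{1..n}. l \<noteq> i \<longrightarrow> x l = x' l" by (simp add: x'_def)
    ultimately have "h x u = h x' u"
      using i(1) u less.prems(1) x' unfolding IG_arc_def by blast
    also have "h x' u = h y u"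
    proof (rule less.hyps)
      show "card {j\<in>{1..n}. x' j \<noteq> y j} < card {j\<in>{1..n}. x j \<noteq> y j}"
        by (rule psubset_card_mono) (use i in \<open>auto simp: x'_def split: if_splits\<close>)
    qed (use x' less.prems(2) in \<open>auto simp: x'_def\<close>)
    finally show ?thesis .
  qed
qed

lemma seq_apply_override_on:
  assumes "\<And>i. i < length xs \<Longrightarrow> f (override_on x val (A \<union> set (take i xs))) (xs ! i) = val (xs ! i)"
  shows "seq_apply f xs (override_on x val A) = override_on x val (A \<union> set xs)"
  using assms
proof (induction xs arbitrary: A)
  case Nil
  then show ?case by (simp add: seq_apply_def)
next
  case (Cons a xs)
  have "upd f a (override_on x val A) = override_on x val (insert a A)"
    using Cons.prems[of 0] by (simp add: upd_def override_on_insert)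
  moreover have "seq_apply f xs (override_on x val (insert a A))
      = override_on x val (insert a A \<union> set xs)"
    using Cons.prems[of "Suc _"] by (intro Cons.IH) auto
  ultimately show ?case by (simp add: seq_apply_def)
qed

lemma set_take_sorted_key:
  fixes r :: "'a \<Rightarrow> 'b::linorder"
  assumes "inj_on r (set xs)" "distinct xs" "sorted (map r xs)" "i < length xs"
  shows "set (take i xs) = {u \<in> set xs. r u < r (xs ! i)}"
proof (intro equalityI subsetI)
  fix u assume "u \<in> set (take i xs)"
  then obtain j where j: "j < i" "u = xs ! j" using assms(4) by (auto simp: in_set_conv_nth)
  have "r (xs ! j) \<le> r (xs ! i)" using sorted_nth_mono[OF assms(3), of j i] j assms(4) by simp
  moreover have "xs ! j \<noteq> xs ! i" using assms(2,4) j by (simp add: nth_eq_iff_index_eq)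
  ultimately show "u \<in> {u \<in> set xs. r u < r (xs ! i)}"
    using assms(1,4) j by (auto simp: inj_on_eq_iff order_le_less)
next
  fix u assume u: "u \<in> {u \<in> set xs. r u < r (xs ! i)}"
  then obtain j where j: "j < length xs" "u = xs ! j" by (auto simp: in_set_conv_nth)
  have "j < i"
  proof (rule ccontr)
    assume "\<not> j < i"
    then have "r (xs ! i) \<le> r (xs ! j)" using sorted_nth_mono[OF assms(3), of i j] j by simp
    with u j show False by simp
  qed
  then show "u \<in> set (take i xs)" using j assms(4) by (auto simp: in_set_conv_nth)
qed

definition last_bag :: "'a set list \<Rightarrow> 'a \<Rightarrow> nat" where
  "last_bag Xs v = Max {a. a < length Xs \<and> v \<in> Xs ! a}"

lemma last_bag_in:
  assumes "X \<in> set Xs" "v \<in> X"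
  shows "last_bag Xs v < length Xs" "v \<in> Xs ! last_bag Xs v"
proof -
  obtain a where "a < length Xs" "v \<in> Xs ! a" using assms by (auto simp: in_set_conv_nth)
  then have "last_bag Xs v \<in> {a. a < length Xs \<and> v \<in> Xs ! a}"
    unfolding last_bag_def by (intro Max_in) auto
  then show "last_bag Xs v < length Xs" "v \<in> Xs ! last_bag Xs v" by auto
qed

lemma le_last_bag: "a < length Xs \<Longrightarrow> v \<in> Xs ! a \<Longrightarrow> a \<le> last_bag Xs v"
  unfolding last_bag_def by (rule Max_ge) auto

lemma ex_rank_refining:
  fixes g :: "'a \<Rightarrow> nat"
  assumes "finite V"
  obtains r :: "'a \<Rightarrow> nat" where "inj_on r V" "\<And>u v. u \<in> V \<Longrightarrow> v \<in> V \<Longrightarrow> r u < r v \<Longrightarrow> g u \<le> g v"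
proof -
  obtain e :: "'a \<Rightarrow> nat" and N where e: "e ` V = {i. i < N}" "inj_on e V"
    using finite_imp_inj_to_nat_seg[OF assms] by blast
  define r where "r v = g v * N + e v" for v
  have e_less: "e v < N" if "v \<in> V" for v using e(1) that by blast
  have "inj_on r V"
  proof (rule inj_onI)
    fix u v assume uv: "u \<in> V" "v \<in> V" "r u = r v"
    then have "e u = e v"
      using e_less[of u] e_less[of v] unfolding r_def by (metis mod_mult_self3 mod_less)
    then show "u = v" using e(2) uv by (simp add: inj_on_eq_iff)
  qed
  moreover have "g u \<le> g v" if "u \<in> V" "v \<in> V" "r u < r v" for u v
  proof (rule ccontr)
    assume "\<not> g u \<le> g v"
    then have "r v < g u * N"
      using e_less[OF that(2)] mult_le_mono1[of "Suc (g v)" "g u" N] unfolding r_def by simp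
    then show False using that(3) unfolding r_def by simp
  qed
  ultimately show ?thesis using that by blast
qed

lemma path_decompD:
  assumes "path_decomp V E Xs"
  shows "\<forall>X\<in>set Xs. X \<subseteq> V"
    and "\<forall>v\<in>V. \<exists>X\<in>set Xs. v \<in> X"
    and "\<forall>e\<in>E. \<exists>X\<in>set Xs. e \<subseteq> X"
    and "\<forall>a b c v. a \<le> c \<and> c \<le> b \<and> b < length Xs \<and> v \<in> Xs ! a \<and> v \<in> Xs ! b \<longrightarrow> v \<in> Xs ! c"
proof -
  note parts = assms[unfolded path_decomp_def]
  show "\<forall>X\<in>set Xs. X \<subseteq> V" using parts by (elim conjE)
  show "\<forall>v\<in>V. \<exists>X\<in>set Xs. v \<in> X" using parts by (elim conjE)
  show "\<forall>e\<in>E. \<exists>X\<in>set Xs. e \<subseteq> X" using parts by (elim conjE)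
  show "\<forall>a b c v. a \<le> c \<and> c \<le> b \<and> b < length Xs \<and> v \<in> Xs ! a \<and> v \<in> Xs ! b \<longrightarrow> v \<in> Xs ! c"
    using parts by (elim conjE)
qed

lemma path_decomp_last_bag:
  assumes "path_decomp V E Xs" "v \<in> V"
  shows "last_bag Xs v < length Xs" "v \<in> Xs ! last_bag Xs v"
proof -
  from bspec[OF path_decompD(2)[OF assms(1)] assms(2)] obtain X where "X \<in> set Xs" "v \<in> X" ..
  then show "last_bag Xs v < length Xs" "v \<in> Xs ! last_bag Xs v" by (rule last_bag_in)+
qed

text \<open>Among the earlier neighbours of the boundary vertices, one with the latest last bag
  \<open>\<beta>\<close> does the job: every edge to a boundary vertex \<open>u\<close> lies in a bag no later than \<open>\<beta>\<close>, and
  \<open>u\<close> survives up to its own last bag, which is no earlier than \<open>\<beta>\<close>.\<close>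

lemma path_decomp_boundary_in_bag:
  fixes r :: "'a \<Rightarrow> 'b::linorder"
  assumes pd: "path_decomp V E Xs" and "finite V"
    and r: "inj_on r V" "\<And>u v. u \<in> V \<Longrightarrow> v \<in> V \<Longrightarrow> r u < r v \<Longrightarrow> last_bag Xs u \<le> last_bag Xs v"
    and z: "z \<in> V"
    and boundary_nonempty: "{u\<in>V. r z \<le> r u \<and> (\<exists>w\<in>V. {w, u} \<in> E \<and> r w < r z)} \<noteq> {}"
  obtains \<beta> w0 where "\<beta> < length Xs" "w0 \<in> Xs ! \<beta>" "r w0 < r z"
    "{u\<in>V. r z \<le> r u \<and> (\<exists>w\<in>V. {w, u} \<in> E \<and> r w < r z)} \<subseteq> Xs ! \<beta>"
proof -
  let ?B = "{u\<in>V. r z \<le> r u \<and> (\<exists>w\<in>V. {w, u} \<in> E \<and> r w < r z)}"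
  define W where "W = {w\<in>V. r w < r z \<and> (\<exists>u\<in>?B. {w, u} \<in> E)}"
  have "finite W" using \<open>finite V\<close> unfolding W_def by simp
  moreover have "W \<noteq> {}" using boundary_nonempty unfolding W_def by blast
  ultimately have "Max (last_bag Xs ` W) \<in> last_bag Xs ` W" by simp
  then obtain w0 where w0: "w0 \<in> W" "last_bag Xs w0 = Max (last_bag Xs ` W)" by (rule imageE) simp
  have w0_max: "last_bag Xs w \<le> last_bag Xs w0" if "w \<in> W" for w
    using w0(2) Max_ge[of "last_bag Xs ` W"] \<open>finite W\<close> that by simp
  define \<beta> where "\<beta> = last_bag Xs w0"
  have "w0 \<in> V" "r w0 < r z" using w0(1) unfolding W_def by auto
  then have \<beta>: "\<beta> < length Xs" "w0 \<in> Xs ! \<beta>" "\<beta> \<le> last_bag Xs z"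
    using path_decomp_last_bag[OF pd] r(2)[of w0 z] z unfolding \<beta>_def by simp_all
  have "?B \<subseteq> Xs ! \<beta>"
  proof
    fix u assume u: "u \<in> ?B"
    then obtain w where w: "w \<in> V" "{w, u} \<in> E" "r w < r z" by blast
    then have "w \<in> W" using u unfolding W_def by blast
    obtain c where c: "c < length Xs" "{w, u} \<subseteq> Xs ! c"
      using bspec[OF path_decompD(3)[OF pd] w(2)] by (metis in_set_conv_nth)
    have "c \<le> \<beta>" using le_last_bag[OF c(1)] c(2) w0_max[OF \<open>w \<in> W\<close>] unfolding \<beta>_def by force
    moreover have "\<beta> \<le> last_bag Xs u"
    proof (cases "u = z")
      case False
      then have "r u \<noteq> r z" using inj_onD[OF r(1)] u z by blast
      with u have "r z < r u" by auto
      then show ?thesis using \<beta>(3) r(2)[of z u] u z by simp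
    qed (use \<beta>(3) in simp)
    ultimately show "u \<in> Xs ! \<beta>"
      using path_decompD(4)[OF pd] c path_decomp_last_bag[OF pd, of u] u by blast
  qed
  then show ?thesis using that \<beta>(1,2) \<open>r w0 < r z\<close> by blast
qed

lemma path_decomp_boundary_card:
  fixes r :: "'a \<Rightarrow> 'b::linorder"
  assumes pd: "path_decomp V E Xs" and "finite V" and bags: "\<forall>X\<in>set Xs. card X \<le> k + 1"
    and r: "inj_on r V" "\<And>u v. u \<in> V \<Longrightarrow> v \<in> V \<Longrightarrow> r u < r v \<Longrightarrow> last_bag Xs u \<le> last_bag Xs v"
    and z: "z \<in> V"
  shows "card {u\<in>V. r z \<le> r u \<and> (\<exists>w\<in>V. {w, u} \<in> E \<and> r w < r z)} \<le> k"
    (is "card ?B \<le> k")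
proof (cases "?B = {}")
  case True
  show ?thesis unfolding True by simp
next
  case False
  with path_decomp_boundary_in_bag[OF assms(1,2) r z] obtain \<beta> w0
    where \<beta>: "\<beta> < length Xs" "w0 \<in> Xs ! \<beta>" "r w0 < r z" "?B \<subseteq> Xs ! \<beta>" by blast
  have "w0 \<notin> ?B" using \<beta>(3) by auto
  moreover have "finite (Xs ! \<beta>)"
    using bspec[OF path_decompD(1)[OF pd] nth_mem[OF \<beta>(1)]] \<open>finite V\<close> by (rule finite_subset)
  ultimately have "card (insert w0 ?B) \<le> card (Xs ! \<beta>)"
    using \<beta>(2,4) by (intro card_mono) auto
  also have "\<dots> \<le> k + 1" using bags \<beta>(1) by simp
  finally show ?thesis using \<open>finite V\<close> \<open>w0 \<notin> ?B\<close> by simp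
qed

lemma nat_mod_recover_summand:
  fixes a b q :: nat
  assumes "a < q"
  shows "nat ((int ((a + b) mod q) - int b) mod int q) = a"
proof -
  have "(int ((a + b) mod q) - int b) mod int q = (int a + int b - int b) mod int q"
    by (simp add: of_nat_mod mod_diff_left_eq)
  then show ?thesis using assms by simp
qed

definition reads_overwritten :: "nat \<Rightarrow> nat \<Rightarrow> ((nat \<Rightarrow> nat) \<Rightarrow> (nat \<Rightarrow> nat)) \<Rightarrow> (nat \<Rightarrow> nat) \<Rightarrow> nat \<Rightarrow> bool"
  where "reads_overwritten q n h r v \<longleftrightarrow> (\<exists>w. IG_arc q n h w v \<and> r w < r v)"

text \<open>The registers are the extra coordinates \<open>n + j\<close>, \<open>j \<in> {1..k}\<close>: register \<open>n + j\<close> receives the sum mod \<open>q\<close>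
  of the new values of the vertices of colour \<open>j\<close> that read an overwritten input. Such a vertex
  recovers its new value by subtracting the new values of the other vertices of its colour; these
  are either already written or, by the colouring condition, still computable from \<open>h\<close>.\<close>

locale register_colouring =
  fixes q n k :: nat and h :: "(nat \<Rightarrow> nat) \<Rightarrow> (nat \<Rightarrow> nat)"
    and r :: "nat \<Rightarrow> nat" and col :: "nat \<Rightarrow> nat"
  assumes q_pos: "0 < q"
    and h_Fmaps: "h \<in> Fmaps q n"
    and r_inj: "inj_on r {1..n}"
    and col_range: "\<And>v. v \<in> {1..n} \<Longrightarrow> reads_overwritten q n h r v \<Longrightarrow> col v \<in> {1..k}"
    and col_separates: "\<And>v u w. v \<in> {1..n} \<Longrightarrow> u \<in> {1..n} \<Longrightarrow> reads_overwritten q n h r v \<Longrightarrow>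
      r v < r u \<Longrightarrow> IG_arc q n h w u \<Longrightarrow> r w < r v \<Longrightarrow> col v \<noteq> col u"
begin

definition colour_class :: "nat \<Rightarrow> nat set" where
  "colour_class j = {u \<in> {1..n}. reads_overwritten q n h r u \<and> col u = j}"

definition target :: "(nat \<Rightarrow> nat) \<Rightarrow> nat \<Rightarrow> nat" where
  "target x c = (if c \<le> n then h x c else (\<Sum>u\<in>colour_class (c - n). h x u) mod q)"

definition recovered :: "(nat \<Rightarrow> nat) \<Rightarrow> nat \<Rightarrow> nat" where
  "recovered y v = nat ((int (y (n + col v))
     - (\<Sum>u\<in>colour_class (col v) - {v}. int (if r u < r v then y u else h (pr n y) u))) mod int q)"

definition network :: "(nat \<Rightarrow> nat) \<Rightarrow> (nat \<Rightarrow> nat)" where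
  "network y = restrict (\<lambda>c. if n < c then target (pr n y) c
     else if reads_overwritten q n h r c then recovered y c else h (pr n y) c) {1..n + k}"

definition schedule :: "nat list" where
  "schedule = [Suc n..<Suc (n + k)] @ sort_key r [1..<Suc n]"

lemma h_in_states: "x \<in> states q n \<Longrightarrow> h x \<in> states q n"
  using h_Fmaps unfolding Fmaps_def by blast

lemma h_less: "x \<in> states q n \<Longrightarrow> u \<in> {1..n} \<Longrightarrow> h x u < q"
  using h_in_states unfolding states_def by (auto simp: PiE_iff)

lemma network_Fmaps: "network \<in> Fmaps q (n + k)"
  unfolding Fmaps_def
proof (intro CollectI ballI)
  fix y assume "y \<in> states q (n + k)"
  then have "pr n y \<in> states q n" by (rule pr_in_states) simp
  then show "network y \<in> states q (n + k)"
    using q_pos h_less unfolding network_def states_def restrict_PiE_iff target_def recovered_def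
    by (auto simp: nat_less_iff)
qed

lemma perm_word_schedule: "perm_word (n + k) schedule"
  unfolding perm_word_def schedule_def by auto

context
  fixes x y :: "nat \<Rightarrow> nat" and v :: nat
  assumes x: "x \<in> states q n" and v: "v \<in> {1..n}"
    and written: "\<And>u. u \<in> {1..n} \<Longrightarrow> r u < r v \<Longrightarrow> y u = h x u"
    and unwritten: "\<And>u. u \<in> {1..n} \<Longrightarrow> \<not> r u < r v \<Longrightarrow> y u = x u"
begin

lemma partial_update_in_states: "pr n y \<in> states q n"
proof -
  have "y u < q" if "u \<in> {1..n}" for u
    using written[OF that] unwritten[OF that] h_less[OF x that] x that
    by (cases "r u < r v") (auto simp: states_def PiE_iff)
  then show ?thesis unfolding pr_def states_def restrict_PiE_iff by simp
qed

lemma partial_update_unaffected: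
  assumes "u \<in> {1..n}" "\<And>w. IG_arc q n h w u \<Longrightarrow> \<not> r w < r v"
  shows "h (pr n y) u = h x u"
  using IG_arc_locality[OF partial_update_in_states x assms(1)] assms unwritten
  unfolding pr_def IG_arc_def by simp

lemma recovered_correct:
  assumes registers: "\<And>j. j \<in> {1..k} \<Longrightarrow> y (n + j) = target x (n + j)"
    and reads: "reads_overwritten q n h r v"
  shows "recovered y v = h x v"
proof -
  define j where "j = col v"
  have j: "j \<in> {1..k}" and v_class: "v \<in> colour_class j"
    using col_range[OF v reads] v reads unfolding j_def colour_class_def by auto
  have others: "(if r u < r v then y u else h (pr n y) u) = h x u"
    if u: "u \<in> colour_class j - {v}" for u
  proof (cases "r u < r v")
    case False
    have "u \<in> {1..n}" "u \<noteq> v" using u unfolding colour_class_def by auto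
    then have "r u \<noteq> r v" using inj_onD[OF r_inj _ _ v] by blast
    with False have "r v < r u" by simp
    have "\<not> r w < r v" if "IG_arc q n h w u" for w
      using col_separates[OF v \<open>u \<in> {1..n}\<close> reads \<open>r v < r u\<close> that] u
      unfolding colour_class_def j_def by auto
    with False show ?thesis using partial_update_unaffected \<open>u \<in> {1..n}\<close> by simp
  qed (use u written in \<open>auto simp: colour_class_def\<close>)
  have "(\<Sum>u\<in>colour_class j - {v}. int (if r u < r v then y u else h (pr n y) u))
      = int (\<Sum>u\<in>colour_class j - {v}. h x u)"
    using others by (simp add: of_nat_sum)
  moreover have "y (n + j) = (h x v + (\<Sum>u\<in>colour_class j - {v}. h x u)) mod q"
    using registers[OF j] j v_class unfolding target_def by (simp add: sum.remove colour_class_def)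
  ultimately show ?thesis
    using nat_mod_recover_summand[OF h_less[OF x v], of "\<Sum>u\<in>colour_class j - {v}. h x u"]
    unfolding recovered_def j_def[symmetric] by simp
qed

lemma network_vertex:
  assumes "\<And>j. j \<in> {1..k} \<Longrightarrow> y (n + j) = target x (n + j)"
  shows "network y v = h x v"
proof (cases "reads_overwritten q n h r v")
  case True
  then show ?thesis using recovered_correct[OF assms] v unfolding network_def by simp
next
  case False
  then show ?thesis
    using partial_update_unaffected[OF v] v unfolding network_def reads_overwritten_def by auto
qed

end

lemma network_step:
  assumes x: "x \<in> states q (n + k)" and i: "i < length schedule"
  shows "network (override_on x (target (pr n x)) (set (take i schedule))) (schedule ! i)
    = target (pr n x) (schedule ! i)"
proof -
  define y where "y = override_on x (target (pr n x)) (set (take i schedule))"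
  define \<sigma> where "\<sigma> = sort_key r [1..<Suc n]"
  have px: "pr n x \<in> states q n" using x by (rule pr_in_states) simp
  have set_\<sigma>: "set \<sigma> = {1..n}" and len_\<sigma>: "length \<sigma> = n" unfolding \<sigma>_def by auto
  have schedule: "schedule = [Suc n..<Suc (n + k)] @ \<sigma>" unfolding schedule_def \<sigma>_def ..
  show ?thesis unfolding y_def[symmetric]
  proof (cases "i < k")
    case True
    then have "schedule ! i = Suc n + i" "set (take i schedule) = {Suc n..<Suc n + i}"
      unfolding schedule by (simp_all add: nth_append take_append del: upt_Suc)
    moreover have "pr n y = pr n x" unfolding y_def pr_def by (intro restrict_ext) (simp add: calculation)
    ultimately show "network y (schedule ! i) = target (pr n x) (schedule ! i)"
      using True unfolding network_def by simp
  next
    case False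
    define v where "v = \<sigma> ! (i - k)"
    have i_k: "i - k < length \<sigma>" using i False unfolding schedule by (simp del: upt_Suc)
    then have v: "v \<in> {1..n}" unfolding v_def using set_\<sigma> nth_mem by blast
    have "schedule ! i = v" unfolding schedule v_def using False by (simp add: nth_append del: upt_Suc)
    moreover have "set (take i schedule) = {Suc n..<Suc (n + k)} \<union> {u \<in> {1..n}. r u < r v}"
      using False set_take_sorted_key[of r \<sigma> "i - k"] r_inj set_\<sigma> i_k
      unfolding schedule v_def \<sigma>_def by (simp add: take_append less_Suc_eq_le del: upt_Suc)
    moreover have "network y v = h (pr n x) v"
    proof (rule network_vertex[OF px v])
      show "y u = h (pr n x) u" if "u \<in> {1..n}" "r u < r v" for u
        using that calculation(2) unfolding y_def target_def by simp
      show "y u = pr n x u" if "u \<in> {1..n}" "\<not> r u < r v" for u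
        using that calculation(2) unfolding y_def pr_def by simp
      show "y (n + j) = target (pr n x) (n + j)" if "j \<in> {1..k}" for j
        using that calculation(2) unfolding y_def by simp
    qed
    ultimately show "network y (schedule ! i) = target (pr n x) (schedule ! i)"
      using v unfolding target_def by simp
  qed
qed

theorem sequentializes_network: "sequentializes q n (n + k) network schedule h"
  unfolding sequentializes_def
proof (intro conjI ballI)
  fix x assume x: "x \<in> states q (n + k)"
  have "seq_apply network schedule x = override_on x (target (pr n x)) (set schedule)"
    using seq_apply_override_on[of schedule network x "target (pr n x)" "{}"] network_step[OF x]
    by simp
  also have "set schedule = {1..n + k}" using perm_word_schedule unfolding perm_word_def by simp
  finally have "pr n (seq_apply network schedule x) = restrict (h (pr n x)) {1..n}"
    unfolding pr_def target_def by (intro restrict_ext) simp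
  also have "\<dots> = h (pr n x)"
    using h_in_states[OF pr_in_states[OF x]] unfolding states_def by simp
  finally show "pr n (seq_apply network schedule x) = h (pr n x)" .
qed (use network_Fmaps perm_word_schedule in simp_all)

end

lemma sequentializable_of_rank:
  fixes r :: "nat \<Rightarrow> nat"
  assumes q: "0 < q" and h: "h \<in> Fmaps q n" and r: "inj_on r {1..n}"
    and boundary: "\<And>z. z \<in> {1..n} \<Longrightarrow>
      card {u \<in> {1..n}. r z \<le> r u \<and> (\<exists>w\<in>{1..n}. IG_arc q n h w u \<and> r w < r z)} \<le> k"
  shows "\<exists>f w. sequentializes q n (n + k) f w h"
proof -
  define S where "S = {v \<in> {1..n}. reads_overwritten q n h r v}"
  define conflict where "conflict v u \<longleftrightarrow> r v < r u \<and> (\<exists>w. IG_arc q n h w u \<and> r w < r v)" for v u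
  have "card {u \<in> S. conflict v u} < k" if v: "v \<in> S" for v
  proof -
    let ?B = "{u \<in> {1..n}. r v \<le> r u \<and> (\<exists>w\<in>{1..n}. IG_arc q n h w u \<and> r w < r v)}"
    have "v \<in> ?B" using v IG_arc_vertices unfolding S_def reads_overwritten_def by blast
    have "{u \<in> S. conflict v u} \<subseteq> ?B - {v}"
      using IG_arc_vertices unfolding S_def conflict_def by fastforce
    then have "card {u \<in> S. conflict v u} \<le> card (?B - {v})" by (intro card_mono) auto
    also have "\<dots> < card ?B" using \<open>v \<in> ?B\<close> by (intro card_Diff1_less) auto
    also have "\<dots> \<le> k" using boundary v unfolding S_def by blast
    finally show ?thesis .
  qed
  then obtain col where col: "\<forall>v\<in>S. col v \<in> {1..k} \<and> (\<forall>u\<in>S. conflict v u \<longrightarrow> col v \<noteq> col u)"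
    using greedy_colouring[of S conflict r k] unfolding conflict_def S_def by auto
  interpret register_colouring q n k h r col
  proof
    show "col v \<in> {1..k}" if "v \<in> {1..n}" "reads_overwritten q n h r v" for v
      using col that unfolding S_def by blast
    show "col v \<noteq> col u" if "v \<in> {1..n}" "u \<in> {1..n}" "reads_overwritten q n h r v"
      "r v < r u" "IG_arc q n h w u" "r w < r v" for v u w
    proof -
      have "u \<in> S" "conflict v u"
        using that unfolding S_def conflict_def reads_overwritten_def by (auto intro: less_trans)
      then show ?thesis using col that(1,3) unfolding S_def by blast
    qed
  qed (fact q h r)+
  show ?thesis using sequentializes_network by blast
qed

lemma ex_path_decomp_pathwidth:
  assumes "\<forall>e\<in>E. e \<subseteq> V"
  shows "\<exists>Xs. path_decomp V E Xs \<and> (\<forall>X\<in>set Xs. card X \<le> pathwidth V E + 1)"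
proof -
  have "path_decomp V E [V]" using assms unfolding path_decomp_def by auto
  then have "\<exists>Xs. path_decomp V E Xs \<and> (\<forall>X\<in>set Xs. card X \<le> card V + 1)" by auto
  then show ?thesis unfolding pathwidth_def by (rule LeastI)
qed

theorem mainTheorem12:
  fixes q n :: nat and h :: "(nat \<Rightarrow> nat) \<Rightarrow> (nat \<Rightarrow> nat)"
  assumes "q \<ge> 2" and "n \<ge> 1" and "h \<in> Fmaps q n"
  shows "kappa_min q n h \<le> pathwidth {1..n} (IG_star_edges q n h)"
proof -
  let ?E = "IG_star_edges q n h" and ?p = "pathwidth {1..n} (IG_star_edges q n h)"
  have "\<forall>e\<in>?E. e \<subseteq> {1..n}" using IG_arc_vertices unfolding IG_star_edges_def by blast
  then obtain Xs where Xs: "path_decomp {1..n} ?E Xs" "\<forall>X\<in>set Xs. card X \<le> ?p + 1"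
    using ex_path_decomp_pathwidth by blast
  obtain r :: "nat \<Rightarrow> nat" where r: "inj_on r {1..n}"
    "\<And>u v. u \<in> {1..n} \<Longrightarrow> v \<in> {1..n} \<Longrightarrow> r u < r v \<Longrightarrow> last_bag Xs u \<le> last_bag Xs v"
    using ex_rank_refining[of "{1..n}"] by blast
  have "card {u \<in> {1..n}. r z \<le> r u \<and> (\<exists>w\<in>{1..n}. IG_arc q n h w u \<and> r w < r z)} \<le> ?p"
    if "z \<in> {1..n}" for z
  proof -
    have "card {u \<in> {1..n}. r z \<le> r u \<and> (\<exists>w\<in>{1..n}. IG_arc q n h w u \<and> r w < r z)}
        \<le> card {u \<in> {1..n}. r z \<le> r u \<and> (\<exists>w\<in>{1..n}. {w, u} \<in> ?E \<and> r w < r z)}"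
      unfolding IG_star_edges_def by (intro card_mono) (simp, blast)
    also have "\<dots> \<le> ?p" using path_decomp_boundary_card[OF Xs(1) _ Xs(2) r that] by simp
    finally show ?thesis .
  qed
  then have "\<exists>f w. sequentializes q n (n + ?p) f w h"
    using sequentializable_of_rank[OF _ assms(3) r(1)] assms(1) by simp
  then show ?thesis unfolding kappa_min_def by (rule Least_le)
qed

end
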